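(* For every hypergraph $H$, $\chi_{min}\leq\chi_{cf}(H)$.
   Context: A hypergraph $H=(\mathcal{V},\mathcal{E})$ has finite vertex set and nonempty hyperedges. A conflict-free colouring of $H$ is a function $C:\mathcal{V}\to\{0,1,2,\dots\}$ such that every hyperedge $E$ contains a colour $j\geq1$ with $|E\cap C^{-1}(j)|=1$; $\chi_{cf}(H)$ is the minimum number of non-zero colours in such a colouring. A representative function is a map $t:\mathcal{E}\to\mathcal{V}$ with $t(E)\in E$; $R=t(\mathcal{E})$. The co-occurrence graph $G_{R,t}$ has vertex set $R$, with distinct $u,v$ adjacent iff some $E\in\mathcal{E}$ has $u,v\in E$ and $t(E)\in\{u,v\}$. $\chi_{min}$ is the minimum of the chromatic number $\chi(G_{R,t})$ over all representative functions $t$. *)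

theory Defs
  imports Main
begin

definition hypergraph :: "'a set \<Rightarrow> 'a set set \<Rightarrow> bool" where
  "hypergraph V Es \<longleftrightarrow> finite V \<and> (\<forall>E\<in>Es. E \<noteq> {} \<and> E \<subseteq> V)"

text \<open>C is a conflict-free colouring using only the non-zero colours 1..k (colour 0 = uncoloured).\<close>
definition cf_colouring :: "'a set \<Rightarrow> 'a set set \<Rightarrow> nat \<Rightarrow> ('a \<Rightarrow> nat) \<Rightarrow> bool" where
  "cf_colouring V Es k C \<longleftrightarrow> (\<forall>v\<in>V. C v \<le> k) \<and>
     (\<forall>E\<in>Es. \<exists>j\<ge>1. card (E \<inter> C -` {j}) = 1)"

definition chi_cf :: "'a set \<Rightarrow> 'a set set \<Rightarrow> nat" where
  "chi_cf V Es = (LEAST k. \<exists>C. cf_colouring V Es k C)"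

definition representative :: "'a set set \<Rightarrow> ('a set \<Rightarrow> 'a) \<Rightarrow> bool" where
  "representative Es t \<longleftrightarrow> (\<forall>E\<in>Es. t E \<in> E)"

definition cooc_adj :: "'a set set \<Rightarrow> ('a set \<Rightarrow> 'a) \<Rightarrow> 'a \<Rightarrow> 'a \<Rightarrow> bool" where
  "cooc_adj Es t u v \<longleftrightarrow> u \<in> t ` Es \<and> v \<in> t ` Es \<and> u \<noteq> v \<and>
     (\<exists>E\<in>Es. u \<in> E \<and> v \<in> E \<and> t E \<in> {u, v})"

definition chromatic_number :: "'a set \<Rightarrow> ('a \<Rightarrow> 'a \<Rightarrow> bool) \<Rightarrow> nat" where
  "chromatic_number R adj = (LEAST k. \<exists>c :: 'a \<Rightarrow> nat.
     (\<forall>v\<in>R. c v < k) \<and> (\<forall>u\<in>R. \<forall>v\<in>R. adj u v \<longrightarrow> c u \<noteq> c v))"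

definition chi_min :: "'a set set \<Rightarrow> nat" where
  "chi_min Es = (LEAST k. \<exists>t. representative Es t \<and>
     chromatic_number (t ` Es) (cooc_adj Es t) = k)"

end

theory Submission
  imports Defs
begin

text \<open>Take a conflict-free colouring C with \<open>\<chi>\<^sub>c\<^sub>f(H)\<close> non-zero colours and let t(E) be a
  vertex of E whose non-zero colour occurs only once in E. If u, v are adjacent in the
  co-occurrence graph via E, one of them is t(E), so the other has a different colour.
  Hence \<open>C - 1\<close> properly colours \<open>G\<^sub>R\<^sub>,\<^sub>t\<close> with \<open>\<chi>\<^sub>c\<^sub>f(H)\<close> colours.\<close>

lemma ex_cf_colouring:
  assumes "finite V" and edges: "\<forall>E\<in>Es. E \<noteq> {} \<and> E \<subseteq> V"
  shows "\<exists>k C. cf_colouring V Es k C"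
proof -
  obtain f where f: "bij_betw f V {0..<card V}"
    using ex_bij_betw_finite_nat[OF \<open>finite V\<close>] by blast
  define C where "C v = (if v \<in> V then f v + 1 else 0)" for v
  have "inj_on C V"
    using bij_betw_imp_inj_on[OF f] by (auto simp: C_def inj_on_def)
  have "cf_colouring V Es (card V) C"
    unfolding cf_colouring_def
  proof (intro conjI ballI)
    fix v assume "v \<in> V"
    then show "C v \<le> card V"
      using bij_betw_apply[OF f] by (fastforce simp: C_def)
  next
    fix E assume "E \<in> Es"
    then obtain v where v: "v \<in> E" and "E \<subseteq> V" using edges by auto
    then have "E \<inter> C -` {C v} = {v}"
      using \<open>inj_on C V\<close> by (auto dest: inj_onD)
    moreover have "C v \<ge> 1" using v \<open>E \<subseteq> V\<close> by (auto simp: C_def)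
    ultimately show "\<exists>j\<ge>1. card (E \<inter> C -` {j}) = 1" by auto
  qed
  then show ?thesis by blast
qed

lemma chi_cf_attained:
  assumes "hypergraph V Es"
  obtains C where "cf_colouring V Es (chi_cf V Es) C"
proof -
  from assms have "\<exists>k C. cf_colouring V Es k C"
    unfolding hypergraph_def by (auto intro: ex_cf_colouring)
  then obtain k C where "cf_colouring V Es k C" by (elim exE)
  then have "\<exists>C. cf_colouring V Es (chi_cf V Es) C"
    unfolding chi_cf_def by (intro LeastI[of "\<lambda>k. \<exists>C. cf_colouring V Es k C" k]) (rule exI)
  then show ?thesis using that by (elim exE)
qed

lemma cf_colouring_unique_vertex:
  assumes "cf_colouring V Es k C" and "E \<in> Es"
  shows "\<exists>v\<in>E. C v \<ge> 1 \<and> E \<inter> C -` {C v} = {v}"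
proof -
  obtain j where "j \<ge> 1" and "card (E \<inter> C -` {j}) = 1"
    using assms unfolding cf_colouring_def by blast
  from \<open>card (E \<inter> C -` {j}) = 1\<close> obtain v where "E \<inter> C -` {j} = {v}"
    by (rule card_1_singletonE)
  then show ?thesis using \<open>j \<ge> 1\<close> by (intro bexI[of _ v]) auto
qed

lemma cooc_adj_colours_differ:
  assumes unique: "\<forall>E\<in>Es. E \<inter> C -` {C (t E)} = {t E}" and "cooc_adj Es t u v"
  shows "C u \<noteq> C v"
proof
  assume "C u = C v"
  obtain E where "E \<in> Es" "u \<in> E" "v \<in> E" "t E \<in> {u, v}" "u \<noteq> v"
    using \<open>cooc_adj Es t u v\<close> unfolding cooc_adj_def by blast
  then have "{u, v} \<subseteq> E \<inter> C -` {C (t E)}" using \<open>C u = C v\<close> by auto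
  also have "\<dots> = {t E}" using unique \<open>E \<in> Es\<close> by (rule bspec)
  finally have "{u, v} \<subseteq> {t E}" .
  then show False using \<open>u \<noteq> v\<close> by simp
qed

lemma chromatic_number_le:
  assumes "\<And>v. v \<in> R \<Longrightarrow> c v < k"
    and "\<And>u v. u \<in> R \<Longrightarrow> v \<in> R \<Longrightarrow> adj u v \<Longrightarrow> c u \<noteq> c v"
  shows "chromatic_number R adj \<le> k"
  unfolding chromatic_number_def using assms by (intro Least_le exI[of _ c]) blast

lemma chi_min_le_chromatic_number:
  assumes "representative Es t"
  shows "chi_min Es \<le> chromatic_number (t ` Es) (cooc_adj Es t)"
  unfolding chi_min_def using assms by (intro Least_le) blast

lemma chi_min_le_cf_colours:
  assumes "\<forall>E\<in>Es. E \<subseteq> V" and C: "cf_colouring V Es k C"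
  shows "chi_min Es \<le> k"
proof -
  define t where "t E = (SOME v. v \<in> E \<and> C v \<ge> 1 \<and> E \<inter> C -` {C v} = {v})" for E
  have t: "t E \<in> E \<and> C (t E) \<ge> 1 \<and> E \<inter> C -` {C (t E)} = {t E}" if "E \<in> Es" for E
    using someI_ex[OF cf_colouring_unique_vertex[OF C that, unfolded Bex_def]]
    unfolding t_def .
  then have "representative Es t" unfolding representative_def by blast
  have unique: "\<forall>E\<in>Es. E \<inter> C -` {C (t E)} = {t E}" using t by blast
  have "chromatic_number (t ` Es) (cooc_adj Es t) \<le> k"
  proof (rule chromatic_number_le[where c = "\<lambda>v. C v - 1"])
    have positive: "C v \<ge> 1" and bounded: "C v \<le> k" if "v \<in> t ` Es" for v
    proof -
      obtain E where "E \<in> Es" and "v = t E" using \<open>v \<in> t ` Es\<close> by blast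
      with t assms(1) have "C v \<ge> 1" and "v \<in> V" by auto
      with C show "C v \<ge> 1" and "C v \<le> k" unfolding cf_colouring_def by auto
    qed
    show "C v - 1 < k" if "v \<in> t ` Es" for v
      using positive[OF that] bounded[OF that] by linarith
    show "C u - 1 \<noteq> C v - 1" if "u \<in> t ` Es" "v \<in> t ` Es" "cooc_adj Es t u v" for u v
      using cooc_adj_colours_differ[OF unique that(3)] positive[OF that(1)] positive[OF that(2)]
      by linarith
  qed
  then show ?thesis
    using chi_min_le_chromatic_number[OF \<open>representative Es t\<close>] by linarith
qed

theorem lemma2:
  fixes V :: "'a set" and Es :: "'a set set"
  assumes "hypergraph V Es"
  shows "chi_min Es \<le> chi_cf V Es"
proof -
  obtain C where "cf_colouring V Es (chi_cf V Es) C"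
    using chi_cf_attained[OF assms] .
  moreover have "\<forall>E\<in>Es. E \<subseteq> V" using assms unfolding hypergraph_def by simp
  ultimately show ?thesis by (intro chi_min_le_cf_colours)
qed

end
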